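(* Consider the one-hop wireless network model described in the context, where the channel powers $\gamma_{i,j}$ are i.i.d. with a distribution of NHT (super-exponential) type, i.e., $\mathbb{E}\{e^{s\gamma_{1,1}}\}<\infty$ for some $s>0$. Then the throughput of any one-hop scheme is upper bounded by $\mathrm{O}(\log n)$: there is a constant $C>0$ such that, with high probability, $T(\mathbb{S})\le C\log n$ for every choice of the active set $\mathbb{S}\subset\{S_1,\dots,S_n\}$.
   Context: Network model: $n$ sources $S_1,\dots,S_n$ and $n$ destinations $D_1,\dots,D_n$; $S_i$ wishes to communicate with $D_i$ in one hop. The channel power from $S_i$ to $D_j$ is $\gamma_{i,j}\ge0$; all $\gamma_{i,j}$ are i.i.d. with mean $\mu>0$. A subset $\mathbb{S}$ of sources is active, each with power $1$ (the others silent); $SINR_i=\frac{\gamma_{i,i}}{N_0+\sum_{S_k\in\mathbb{S},k\ne i}\gamma_{k,i}}$ for $S_i\in\mathbb{S}$ (and $0$ otherwise), with noise variance $N_0\ge0$; $D_i$ succeeds if $SINR_i>\beta$ for a fixed constant $\beta>0$. The throughput $T(\mathbb{S})$ is the number of successful destinations. Logarithms are natural. "With high probability" means with probability tending to $1$ as $n\to\infty$. *)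

theory Defs
  imports "HOL-Probability.Probability"
begin

text \<open>Sources/destinations are indexed by 0..n-1. A gain matrix g maps (k,i) to
  the channel power from source k to destination i. S is the set of active sources.\<close>

definition sinr :: "real \<Rightarrow> (nat \<Rightarrow> nat \<Rightarrow> real) \<Rightarrow> nat set \<Rightarrow> nat \<Rightarrow> ereal" where
  "sinr N0 g S i =
     (if i \<in> S then
        (let d = N0 + (\<Sum>k\<in>S - {i}. g k i) in
          if d = 0 then (if g i i > 0 then \<infinity> else 0) else ereal (g i i / d))
      else 0)"

definition throughput :: "real \<Rightarrow> real \<Rightarrow> (nat \<Rightarrow> nat \<Rightarrow> real) \<Rightarrow> nat set \<Rightarrow> nat" where
  "throughput N0 \<beta> g S = card {i \<in> S. sinr N0 g S i > ereal \<beta>}"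

end

theory Submission
  imports Defs "HOL-Real_Asymp.Real_Asymp"
begin

(* If more than t = \<lfloor>C log n\<rfloor> + 1 destinations succeed, pick t of them, forming a set T.
   Adding up their success conditions, with the interference restricted to the senders in T,
   shows that the t direct gains dominate \<beta> times the t(t - 1) cross gains inside T.
   By the exponential Markov inequality and independence this has probability at most
   M^t \<phi>^(t(t - 1)), where M = E e^(s\<gamma>) < \<infinity> and \<phi> = E e^(-s\<beta>\<gamma>) < 1 because \<gamma> \<ge> 0 is not
   almost surely 0. A union bound over the (n choose t) \<le> n^t choices of T leaves
   (n M \<phi>^(t - 1))^t, which is O(1/n^2) once C is large compared with 1 / log(1/\<phi>). *)

lemma sum_square_diag_offdiag:
  fixes f g :: "'i \<times> 'i \<Rightarrow> 'b::comm_monoid_add"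
  assumes "finite T"
  shows "(\<Sum>p\<in>T \<times> T. if fst p = snd p then f p else g p)
       = (\<Sum>i\<in>T. f (i, i)) + (\<Sum>i\<in>T. \<Sum>k\<in>T - {i}. g (k, i))"
proof -
  have "(\<Sum>p\<in>T \<times> T. if fst p = snd p then f p else g p)
      = (\<Sum>k\<in>T. \<Sum>i\<in>T. if k = i then f (k, i) else g (k, i))"
    unfolding sum.cartesian_product by (intro sum.cong) auto
  also have "\<dots> = (\<Sum>i\<in>T. \<Sum>k\<in>T. if k = i then f (k, i) else g (k, i))"
    by (rule sum.swap)
  also have "\<dots> = (\<Sum>i\<in>T. f (i, i) + (\<Sum>k\<in>T - {i}. g (k, i)))"
    using assms by (intro sum.cong refl) (simp add: sum.remove)
  finally show ?thesis by (simp add: sum.distrib)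
qed

lemma prod_square_diag_offdiag_const:
  fixes a b :: "'b::comm_monoid_mult"
  assumes "finite T"
  shows "(\<Prod>p\<in>T \<times> T. if fst p = snd p then a else b) = a ^ card T * b ^ (card T * (card T - 1))"
proof -
  have "(\<Prod>p\<in>T \<times> T. if fst p = snd p then a else b) = (\<Prod>k\<in>T. \<Prod>i\<in>T. if k = i then a else b)"
    unfolding prod.cartesian_product by (intro prod.cong) auto
  also have "\<dots> = (\<Prod>k\<in>T. a * b ^ (card T - 1))"
  proof (rule prod.cong[OF refl])
    fix k assume k: "k \<in> T"
    have "(\<Prod>i\<in>T. if k = i then a else b) = a * (\<Prod>i\<in>T - {k}. if k = i then a else b)"
      using assms k by (simp add: prod.remove)
    also have "(\<Prod>i\<in>T - {k}. if k = i then a else b) = (\<Prod>i\<in>T - {k}. b)"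
      by (rule prod.cong) auto
    finally show "(\<Prod>i\<in>T. if k = i then a else b) = a * b ^ (card T - 1)"
      using assms k by simp
  qed
  finally show ?thesis
    by (simp add: power_mult_distrib power_mult[symmetric] mult.commute)
qed

lemma sinr_gt_imp_interference_le:
  assumes "i \<in> S" "N0 \<ge> 0" "\<beta> > 0" "\<And>k. k \<in> S \<Longrightarrow> g k i \<ge> 0" "sinr N0 g S i > ereal \<beta>"
  shows "\<beta> * (\<Sum>k\<in>S - {i}. g k i) \<le> g i i"
proof -
  define d where "d = N0 + (\<Sum>k\<in>S - {i}. g k i)"
  have interference_nonneg: "(\<Sum>k\<in>S - {i}. g k i) \<ge> 0"
    using assms(4) by (intro sum_nonneg) auto
  show ?thesis
  proof (cases "d = 0")
    case True
    then have "(\<Sum>k\<in>S - {i}. g k i) = 0" using interference_nonneg assms(2) by (simp add: d_def)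
    then show ?thesis using assms(1,4) by simp
  next
    case False
    then have "d > 0" using interference_nonneg assms(2) by (simp add: d_def)
    moreover have "\<beta> < g i i / d"
      using assms(1,5) False unfolding sinr_def d_def[symmetric] Let_def by simp
    ultimately have "\<beta> * d < g i i" by (simp add: field_simps)
    moreover have "\<beta> * N0 \<ge> 0" using assms(2,3) by simp
    ultimately show ?thesis by (simp add: d_def algebra_simps)
  qed
qed

definition interference_dominated :: "real \<Rightarrow> ('i \<Rightarrow> 'i \<Rightarrow> real) \<Rightarrow> 'i set \<Rightarrow> bool" where
  "interference_dominated \<beta> g T \<longleftrightarrow> \<beta> * (\<Sum>i\<in>T. \<Sum>k\<in>T - {i}. g k i) \<le> (\<Sum>i\<in>T. g i i)"

lemma obtain_interference_dominated_subset:
  assumes "finite S" "N0 \<ge> 0" "\<beta> > 0" "\<And>k i. k \<in> S \<Longrightarrow> i \<in> S \<Longrightarrow> g k i \<ge> 0"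
    and "t \<le> throughput N0 \<beta> g S"
  obtains T where "T \<subseteq> S" "card T = t" "interference_dominated \<beta> g T"
proof -
  define W where "W = {i \<in> S. sinr N0 g S i > ereal \<beta>}"
  have "t \<le> card W" using assms(5) by (simp add: W_def throughput_def)
  then obtain T where T: "T \<subseteq> W" "card T = t" by (meson obtain_subset_with_card_n)
  have "\<beta> * (\<Sum>k\<in>T - {i}. g k i) \<le> g i i" if "i \<in> T" for i
  proof -
    have i: "i \<in> S" "sinr N0 g S i > ereal \<beta>" using that T(1) by (auto simp: W_def)
    have "(\<Sum>k\<in>T - {i}. g k i) \<le> (\<Sum>k\<in>S - {i}. g k i)"
      using T(1) i(1) assms(1,4) by (intro sum_mono2) (auto simp: W_def)
    then have "\<beta> * (\<Sum>k\<in>T - {i}. g k i) \<le> \<beta> * (\<Sum>k\<in>S - {i}. g k i)"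
      using assms(3) by simp
    also have "\<dots> \<le> g i i"
      using i assms(2-4) by (intro sinr_gt_imp_interference_le) auto
    finally show ?thesis .
  qed
  then have "interference_dominated \<beta> g T"
    unfolding interference_dominated_def by (simp add: sum_distrib_left sum_mono)
  moreover have "T \<subseteq> S" using T(1) by (auto simp: W_def)
  ultimately show ?thesis using T(2) that by blast
qed

lemma throughput_cong:
  assumes "\<And>k i. k \<in> S \<Longrightarrow> i \<in> S \<Longrightarrow> g k i = g' k i"
  shows "throughput N0 \<beta> g S = throughput N0 \<beta> g' S"
proof -
  have "sinr N0 g S i = sinr N0 g' S i" if "i \<in> S" for i
    unfolding sinr_def Let_def using assms that by (auto intro!: sum.cong)
  then show ?thesis unfolding throughput_def by (metis (no_types, lifting) Collect_cong)
qed

lemma throughput_le_measurable: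
  assumes "finite S" "\<And>k i. k \<in> S \<Longrightarrow> i \<in> S \<Longrightarrow> X k i \<in> borel_measurable M"
  shows "{\<omega> \<in> space M. real (throughput N0 \<beta> (\<lambda>k i. X k i \<omega>) S) \<le> c} \<in> sets M"
proof -
  (* the gains outside S \<times> S do not matter but need not be measurable *)
  define Y where "Y k i \<omega> = (if k \<in> S \<and> i \<in> S then X k i \<omega> else 0)" for k i \<omega>
  have [measurable]: "Y k i \<in> borel_measurable M" for k i
    unfolding Y_def using assms(2)[of k i] by (cases "k \<in> S \<and> i \<in> S") (simp_all del: de_Morgan_conj)
  have "real (throughput N0 \<beta> (\<lambda>k i. X k i \<omega>) S)
      = (\<Sum>i\<in>S. if sinr N0 (\<lambda>k i. Y k i \<omega>) S i > ereal \<beta> then 1 else 0)" for \<omega>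
    using assms(1) by (subst throughput_cong[of S _ "\<lambda>k i. Y k i \<omega>"])
      (simp_all add: Y_def throughput_def sum.If_cases Int_def)
  moreover have "(\<lambda>\<omega>. sinr N0 (\<lambda>k i. Y k i \<omega>) S i) \<in> borel_measurable M" for i
    unfolding sinr_def Let_def by measurable
  ultimately show ?thesis by simp
qed

lemma (in prob_space) expectation_exp_neg_lt_1:
  fixes X :: "'a \<Rightarrow> real"
  assumes X: "random_variable borel X" and nonneg: "AE \<omega> in M. 0 \<le> X \<omega>"
    and pos: "expectation X > 0" and c: "c > 0"
  shows "integrable M (\<lambda>\<omega>. exp (- c * X \<omega>))" and "expectation (\<lambda>\<omega>. exp (- c * X \<omega>)) < 1"
proof -
  show int: "integrable M (\<lambda>\<omega>. exp (- c * X \<omega>))"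
    using nonneg c X by (intro integrable_const_bound[where B = 1]) (auto elim!: eventually_mono)
  have gap_nonneg: "AE \<omega> in M. 0 \<le> 1 - exp (- c * X \<omega>)"
    using nonneg by eventually_elim (use c in simp)
  show "expectation (\<lambda>\<omega>. exp (- c * X \<omega>)) < 1"
  proof (rule ccontr)
    assume "\<not> ?thesis"
    moreover have "expectation (\<lambda>\<omega>. 1 - exp (- c * X \<omega>)) = 1 - expectation (\<lambda>\<omega>. exp (- c * X \<omega>))"
      using int by (simp add: prob_space)
    moreover have "expectation (\<lambda>\<omega>. 1 - exp (- c * X \<omega>)) \<ge> 0"
      using gap_nonneg by (rule integral_nonneg_AE)
    ultimately have "expectation (\<lambda>\<omega>. 1 - exp (- c * X \<omega>)) = 0" by simp
    then have "AE \<omega> in M. 1 - exp (- c * X \<omega>) = 0"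
      using integral_nonneg_eq_0_iff_AE[OF _ gap_nonneg] int by simp
    then have "AE \<omega> in M. X \<omega> = 0"
      by eventually_elim (use c in simp)
    then have "expectation X = expectation (\<lambda>_. 0)"
      using X by (intro integral_cong_AE) auto
    then show False using pos by simp
  qed
qed

lemma (in prob_space) indep_vars_integral_prod_comp:
  fixes X :: "'i \<Rightarrow> 'a \<Rightarrow> real" and f :: "'i \<Rightarrow> real \<Rightarrow> real"
  assumes I: "finite I" and indep: "indep_vars (\<lambda>_. borel) X I"
    and distr: "\<And>i. i \<in> I \<Longrightarrow> distr M borel (X i) = D"
    and f_meas: "\<And>i. i \<in> I \<Longrightarrow> f i \<in> borel_measurable borel"
    and f_int: "\<And>i. i \<in> I \<Longrightarrow> integrable D (f i)"
  shows "integrable M (\<lambda>\<omega>. \<Prod>i\<in>I. f i (X i \<omega>))"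
    and "(\<integral>\<omega>. (\<Prod>i\<in>I. f i (X i \<omega>)) \<partial>M) = (\<Prod>i\<in>I. \<integral>x. f i x \<partial>D)"
proof -
  have X_meas: "X i \<in> borel_measurable M" if "i \<in> I" for i
    using indep that by (auto simp: indep_vars_def)
  have indep_comp: "indep_vars (\<lambda>_. borel) (\<lambda>i \<omega>. f i (X i \<omega>)) I"
    using indep f_meas by (rule indep_vars_compose2)
  have int: "integrable M (\<lambda>\<omega>. f i (X i \<omega>))" if "i \<in> I" for i
    using f_int[OF that] integrable_distr_eq[OF X_meas f_meas, OF that that] distr[OF that] by simp
  show "integrable M (\<lambda>\<omega>. \<Prod>i\<in>I. f i (X i \<omega>))"
    using indep_vars_integrable[OF I indep_comp int] .
  have "(\<integral>\<omega>. f i (X i \<omega>) \<partial>M) = (\<integral>x. f i x \<partial>D)" if "i \<in> I" for i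
    using integral_distr[OF X_meas f_meas, OF that that] distr[OF that] by simp
  then show "(\<integral>\<omega>. (\<Prod>i\<in>I. f i (X i \<omega>)) \<partial>M) = (\<Prod>i\<in>I. \<integral>x. f i x \<partial>D)"
    using indep_vars_lebesgue_integral[OF I indep_comp int] by simp
qed

lemma (in prob_space) prob_interference_dominated_le:
  fixes X :: "'i \<Rightarrow> 'i \<Rightarrow> 'a \<Rightarrow> real"
  assumes T: "finite T" and s: "s \<ge> 0"
    and indep: "indep_vars (\<lambda>_. borel) (\<lambda>(k, i). X k i) (T \<times> T)"
    and distr: "\<And>k i. k \<in> T \<Longrightarrow> i \<in> T \<Longrightarrow> distr M borel (X k i) = D"
    and int_signal: "integrable D (\<lambda>x. exp (s * x))"
    and int_interference: "integrable D (\<lambda>x. exp (- (s * \<beta>) * x))"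
  shows "prob {\<omega> \<in> space M. interference_dominated \<beta> (\<lambda>k i. X k i \<omega>) T}
       \<le> (\<integral>x. exp (s * x) \<partial>D) ^ card T * (\<integral>x. exp (- (s * \<beta>) * x) \<partial>D) ^ (card T * (card T - 1))"
proof -
  define A where "A = {\<omega> \<in> space M. interference_dominated \<beta> (\<lambda>k i. X k i \<omega>) T}"
  define f where "f p x = (if fst p = snd p then exp (s * x) else exp (- (s * \<beta>) * x))"
    for p :: "'i \<times> 'i" and x :: real
  define E where "E \<omega> = (\<Prod>p\<in>T \<times> T. f p ((\<lambda>(k, i). X k i) p \<omega>))" for \<omega>
  have X_meas: "X k i \<in> borel_measurable M" if "k \<in> T" "i \<in> T" for k i
    using indep that by (auto simp: indep_vars_def)
  have f_meas: "f p \<in> borel_measurable borel" for p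
    unfolding f_def by (cases "fst p = snd p") simp_all
  have f_int: "integrable D (f p)" for p
    unfolding f_def using int_signal int_interference by (cases "fst p = snd p") simp_all
  note E_facts = indep_vars_integral_prod_comp[where f = f, OF _ indep _ f_meas f_int]
  have E_int: "integrable M E"
    unfolding E_def by (rule E_facts(1)) (use T distr in auto)
  have E_integral: "(\<integral>\<omega>. E \<omega> \<partial>M) = (\<Prod>p\<in>T \<times> T. \<integral>x. f p x \<partial>D)"
    unfolding E_def by (rule E_facts(2)) (use T distr in auto)
  have E_eq: "E \<omega> = exp (s * (\<Sum>i\<in>T. X i i \<omega>) - s * \<beta> * (\<Sum>i\<in>T. \<Sum>k\<in>T - {i}. X k i \<omega>))" for \<omega>
  proof -
    have "E \<omega> = (\<Prod>p\<in>T \<times> T. exp (if fst p = snd p then s * X (fst p) (snd p) \<omega>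
                                       else - (s * \<beta>) * X (fst p) (snd p) \<omega>))"
      unfolding E_def f_def by (intro prod.cong) auto
    also have "\<dots> = exp (\<Sum>p\<in>T \<times> T. if fst p = snd p then s * X (fst p) (snd p) \<omega>
                                    else - (s * \<beta>) * X (fst p) (snd p) \<omega>)"
      using T by (simp add: exp_sum)
    finally show ?thesis
      by (simp add: sum_square_diag_offdiag[OF T] sum_distrib_left sum_negf)
  qed
  have A_meas: "A \<in> sets M"
    unfolding A_def interference_dominated_def using X_meas by (intro borel_measurable_le borel_measurable_sum) auto
  have "prob A \<le> (\<integral>\<omega>. E \<omega> \<partial>M)"
  proof -
    have "indicator A \<omega> \<le> E \<omega>" if "\<omega> \<in> space M" for \<omega>
      using mult_left_mono[OF _ s]
      by (auto simp: A_def interference_dominated_def E_eq indicator_def mult.assoc)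
    then have "(\<integral>\<omega>. indicator A \<omega> \<partial>M) \<le> (\<integral>\<omega>. E \<omega> \<partial>M)"
      using A_meas E_int by (intro integral_mono) (auto simp: emeasure_eq_measure)
    then show ?thesis using A_meas by simp
  qed
  also have "\<dots> = (\<Prod>p\<in>T \<times> T. if fst p = snd p then \<integral>x. exp (s * x) \<partial>D
                                  else \<integral>x. exp (- (s * \<beta>) * x) \<partial>D)"
    unfolding E_integral f_def by (intro prod.cong) auto
  finally show ?thesis
    unfolding A_def prod_square_diag_offdiag_const[OF T] .
qed

lemma (in prob_space) prob_exists_interference_dominated_le:
  fixes X :: "'i \<Rightarrow> 'i \<Rightarrow> 'a \<Rightarrow> real" and t :: nat
  assumes U: "finite U" and s: "s \<ge> 0"
    and indep: "indep_vars (\<lambda>_. borel) (\<lambda>(k, i). X k i) (U \<times> U)"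
    and distr: "\<And>k i. k \<in> U \<Longrightarrow> i \<in> U \<Longrightarrow> distr M borel (X k i) = D"
    and int_signal: "integrable D (\<lambda>x. exp (s * x))"
    and int_interference: "integrable D (\<lambda>x. exp (- (s * \<beta>) * x))"
  defines "bad \<equiv> {\<omega> \<in> space M. \<exists>T \<subseteq> U. card T = t \<and> interference_dominated \<beta> (\<lambda>k i. X k i \<omega>) T}"
  shows "bad \<in> events"
    and "prob bad \<le> real (card U choose t) * (\<integral>x. exp (s * x) \<partial>D) ^ t
                                           * (\<integral>x. exp (- (s * \<beta>) * x) \<partial>D) ^ (t * (t - 1))"
proof -
  define \<T> where "\<T> = {T. T \<subseteq> U \<and> card T = t}"
  define dominated where "dominated T = {\<omega> \<in> space M. interference_dominated \<beta> (\<lambda>k i. X k i \<omega>) T}" for T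
  have bad_eq: "bad = (\<Union>T\<in>\<T>. dominated T)"
    by (auto simp: bad_def dominated_def \<T>_def)
  have X_meas: "X k i \<in> borel_measurable M" if "k \<in> U" "i \<in> U" for k i
    using indep_vars_def[THEN iffD1, OF indep, THEN conjunct1] that by auto
  have \<T>_finite: "finite \<T>"
    unfolding \<T>_def by (rule finite_subset[of _ "Pow U"]) (use U in auto)
  have dominated_meas: "dominated T \<in> sets M" if "T \<in> \<T>" for T
    using that X_meas unfolding dominated_def interference_dominated_def \<T>_def
    by (intro borel_measurable_le borel_measurable_sum borel_measurable_times borel_measurable_const) auto
  then show "bad \<in> events"
    unfolding bad_eq using \<T>_finite by auto
  have "prob bad \<le> (\<Sum>T\<in>\<T>. prob (dominated T))"
    unfolding bad_eq using \<T>_finite dominated_meas by (intro finite_measure_subadditive_finite) auto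
  also have "\<dots> \<le> (\<Sum>T\<in>\<T>. (\<integral>x. exp (s * x) \<partial>D) ^ t * (\<integral>x. exp (- (s * \<beta>) * x) \<partial>D) ^ (t * (t - 1)))"
  proof (rule sum_mono)
    fix T assume "T \<in> \<T>"
    then have T: "T \<subseteq> U" "card T = t" by (auto simp: \<T>_def)
    then have "indep_vars (\<lambda>_. borel) (\<lambda>(k, i). X k i) (T \<times> T)"
      by (intro indep_vars_subset[OF indep]) auto
    then show "prob (dominated T) \<le> (\<integral>x. exp (s * x) \<partial>D) ^ t * (\<integral>x. exp (- (s * \<beta>) * x) \<partial>D) ^ (t * (t - 1))"
      unfolding dominated_def using T U distr
      by (intro prob_interference_dominated_le[OF _ s _ _ int_signal int_interference, of T X, simplified T])
        (auto intro: finite_subset)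
  qed
  also have "\<dots> = real (card U choose t) * (\<integral>x. exp (s * x) \<partial>D) ^ t * (\<integral>x. exp (- (s * \<beta>) * x) \<partial>D) ^ (t * (t - 1))"
    using n_subsets[OF U, of t] by (simp add: \<T>_def)
  finally show "prob bad \<le> \<dots>" .
qed

lemma (in prob_space) prob_all_throughputs_le_ge:
  fixes X :: "nat \<Rightarrow> nat \<Rightarrow> 'a \<Rightarrow> real"
  assumes U: "finite U"
    and indep: "indep_vars (\<lambda>_. borel) (\<lambda>(k, i). X k i) (U \<times> U)"
    and distr: "\<And>k i. k \<in> U \<Longrightarrow> i \<in> U \<Longrightarrow> distr M borel (X k i) = D"
    and nonneg: "AE x in D. 0 \<le> x" and N0: "N0 \<ge> 0" and \<beta>: "\<beta> > 0" and s: "s \<ge> 0"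
    and int_signal: "integrable D (\<lambda>x. exp (s * x))"
    and int_interference: "integrable D (\<lambda>x. exp (- (s * \<beta>) * x))"
    and t: "real t - 1 \<le> c"
  shows "1 - real (card U choose t) * (\<integral>x. exp (s * x) \<partial>D) ^ t * (\<integral>x. exp (- (s * \<beta>) * x) \<partial>D) ^ (t * (t - 1))
       \<le> prob {\<omega> \<in> space M. \<forall>S \<subseteq> U. real (throughput N0 \<beta> (\<lambda>k i. X k i \<omega>) S) \<le> c}"
proof -
  define bad where
    "bad = {\<omega> \<in> space M. \<exists>T \<subseteq> U. card T = t \<and> interference_dominated \<beta> (\<lambda>k i. X k i \<omega>) T}"
  define good where "good = {\<omega> \<in> space M. \<forall>S \<subseteq> U. real (throughput N0 \<beta> (\<lambda>k i. X k i \<omega>) S) \<le> c}"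
  note bad = prob_exists_interference_dominated_le[OF U s indep distr int_signal int_interference,
      of t, folded bad_def]
  have X_meas: "X k i \<in> borel_measurable M" if "k \<in> U" "i \<in> U" for k i
    using indep_vars_def[THEN iffD1, OF indep, THEN conjunct1] that by auto
  have good_meas: "good \<in> sets M"
  proof -
    have "good = (\<Inter>S\<in>Pow U. {\<omega> \<in> space M. real (throughput N0 \<beta> (\<lambda>k i. X k i \<omega>) S) \<le> c})"
      unfolding good_def by auto
    also have "\<dots> \<in> sets M"
      using U X_meas by (intro sets.finite_INT throughput_le_measurable) (auto intro: finite_subset)
    finally show ?thesis .
  qed
  have "AE \<omega> in M. \<forall>k\<in>U. \<forall>i\<in>U. 0 \<le> X k i \<omega>"
  proof (intro AE_finite_allI U)
    fix k i assume ki: "k \<in> U" "i \<in> U"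
    have "AE x in distr M borel (X k i). 0 \<le> x" unfolding distr[OF ki] by (rule nonneg)
    then show "AE \<omega> in M. 0 \<le> X k i \<omega>"
      using AE_distr_iff[OF X_meas[OF ki], of "\<lambda>x. 0 \<le> x"] by simp
  qed
  then have "AE \<omega> in M. \<omega> \<in> space M - bad \<longrightarrow> \<omega> \<in> good"
  proof eventually_elim
    case (elim \<omega>)
    have "real (throughput N0 \<beta> (\<lambda>k i. X k i \<omega>) S) \<le> c" if S: "S \<subseteq> U" and \<omega>: "\<omega> \<in> space M - bad" for S
    proof (rule ccontr)
      assume "\<not> ?thesis"
      then have many: "t \<le> throughput N0 \<beta> (\<lambda>k i. X k i \<omega>) S" using t by linarith
      have "finite S" using S U by (rule finite_subset)
      then obtain T where "T \<subseteq> S" "card T = t" "interference_dominated \<beta> (\<lambda>k i. X k i \<omega>) T"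
        by (rule obtain_interference_dominated_subset[OF _ N0 \<beta> _ many]) (use S elim in blast)+
      then show False using S \<omega> by (auto simp: bad_def)
    qed
    then show ?case by (auto simp: good_def)
  qed
  then have "prob (space M - bad) \<le> prob good"
    using good_meas by (rule finite_measure_mono_AE)
  then show ?thesis
    using bad by (simp add: prob_compl good_def)
qed

lemma power_nat_floor_log_le:
  fixes q :: real and n :: nat
  assumes q: "0 < q" "q < 1" and n: "n \<ge> 1"
  shows "q ^ nat \<lfloor>- 3 / ln q * ln (real n)\<rfloor> \<le> 1 / (q * real n ^ 3)"
proof -
  define m where "m = nat \<lfloor>- 3 / ln q * ln (real n)\<rfloor>"
  have ln_q: "ln q < 0" using q by simp
  have "- 3 / ln q * ln (real n) \<ge> 0"
    using ln_q n by (simp add: divide_nonneg_neg)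
  then have m: "real m \<ge> - 3 / ln q * ln (real n) - 1"
    unfolding m_def by linarith
  have "q ^ m = exp (real m * ln q)"
    using q by (simp add: exp_of_nat_mult)
  also have "\<dots> \<le> exp ((- 3 / ln q * ln (real n) - 1) * ln q)"
    using m ln_q by (simp add: mult_right_mono_neg)
  also have "(- 3 / ln q * ln (real n) - 1) * ln q = - ln (q * real n ^ 3)"
    using ln_q q n by (simp add: field_simps ln_mult ln_realpow)
  also have "exp \<dots> = 1 / (q * real n ^ 3)"
    using q n by (simp add: exp_minus inverse_eq_divide)
  finally show ?thesis unfolding m_def .
qed

lemma binomial_union_bound_le_power:
  fixes a b :: real and n t :: nat
  assumes "0 \<le> a" "0 \<le> b"
  shows "real (n choose t) * a ^ t * b ^ (t * (t - 1)) \<le> (real n * a * b ^ (t - 1)) ^ t"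
proof -
  have "real (n choose t) \<le> real n ^ t"
    using binomial_le_pow[of t n] by (cases "t \<le> n") (simp_all add: binomial_eq_0 flip: of_nat_power)
  then have "real (n choose t) * a ^ t * b ^ (t * (t - 1)) \<le> real n ^ t * a ^ t * b ^ (t * (t - 1))"
    using assms by (intro mult_right_mono) simp_all
  also have "\<dots> = (real n * a * b ^ (t - 1)) ^ t"
    by (simp add: power_mult_distrib power_mult[symmetric] mult.commute)
  finally show ?thesis .
qed

lemma binomial_union_bound_tendsto_0:
  fixes a b :: real
  assumes a: "0 \<le> a" and b: "0 \<le> b" "b < 1"
  obtains C where "C > 0"
    "(\<lambda>n. let t = nat \<lfloor>C * ln (real n)\<rfloor> + 1 in real (n choose t) * a ^ t * b ^ (t * (t - 1)))
       \<longlonglongrightarrow> 0"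
proof
  (* for C = -3 / ln q with b \<le> q < 1, the factor b^(t - 1) is O(1/n^3), beating n^t *)
  define q where "q = (1 + b) / 2"
  have q: "0 < q" "q < 1" "b \<le> q" using b by (auto simp: q_def)
  show "- 3 / ln q > 0" using q by (simp add: divide_pos_neg)
  define K where "K = max a 1 / q"
  have upper: "eventually (\<lambda>n. (let t = nat \<lfloor>- 3 / ln q * ln (real n)\<rfloor> + 1 in
          real (n choose t) * a ^ t * b ^ (t * (t - 1))) \<le> K / real n ^ 2) sequentially"
    using eventually_ge_at_top[of "max 1 (nat \<lceil>K\<rceil>)"]
  proof eventually_elim
    case (elim n)
    define t where "t = nat \<lfloor>- 3 / ln q * ln (real n)\<rfloor> + 1"
    have n: "n \<ge> 1" "K \<le> real n" using elim by linarith+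
    have "b ^ (t - 1) \<le> 1 / (q * real n ^ 3)"
      using order.trans[OF power_mono[OF q(3) b(1)] power_nat_floor_log_le[OF q(1,2) n(1)]]
      by (simp add: t_def)
    then have "real n * a * b ^ (t - 1) \<le> real n * max a 1 * (1 / (q * real n ^ 3))"
      using a b by (intro mult_mono) auto
    also have "\<dots> = K / real n ^ 2"
      using n by (simp add: K_def power2_eq_square power3_eq_cube)
    finally have base: "real n * a * b ^ (t - 1) \<le> K / real n ^ 2" .
    have K: "K / real n ^ 2 \<le> 1"
      using n by (simp add: power2_eq_square divide_le_eq order.trans[OF n(2)])
    have "real (n choose t) * a ^ t * b ^ (t * (t - 1)) \<le> (real n * a * b ^ (t - 1)) ^ t"
      using a b(1) by (rule binomial_union_bound_le_power)
    also have "\<dots> \<le> (K / real n ^ 2) ^ t"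
      using base a b by (intro power_mono) auto
    also have "\<dots> \<le> K / real n ^ 2"
      using power_decreasing[of 1 t "K / real n ^ 2"] K q by (simp add: t_def K_def)
    finally show ?case by (simp add: t_def)
  qed
  have lower: "eventually (\<lambda>n. 0 \<le> (let t = nat \<lfloor>- 3 / ln q * ln (real n)\<rfloor> + 1 in
      real (n choose t) * a ^ t * b ^ (t * (t - 1)))) sequentially"
    using a b by (simp add: Let_def)
  have "(\<lambda>n. K / real n ^ 2) \<longlonglongrightarrow> 0" by real_asymp
  then show "(\<lambda>n. let t = nat \<lfloor>- 3 / ln q * ln (real n)\<rfloor> + 1 in
      real (n choose t) * a ^ t * b ^ (t * (t - 1))) \<longlonglongrightarrow> 0"
    by (rule tendsto_sandwich[OF lower upper tendsto_const])
qed

lemma (in prob_space) throughputs_le_log_tendsto_1: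
  fixes X :: "nat \<Rightarrow> nat \<Rightarrow> nat \<Rightarrow> 'a \<Rightarrow> real"
  assumes indep: "\<And>n. indep_vars (\<lambda>_. borel) (\<lambda>(k, i). X n k i) ({..<n} \<times> {..<n})"
    and distr: "\<And>n k i. k < n \<Longrightarrow> i < n \<Longrightarrow> distr M borel (X n k i) = D"
    and nonneg: "AE x in D. 0 \<le> x" and N0: "N0 \<ge> 0" and \<beta>: "\<beta> > 0" and s: "s \<ge> 0"
    and int_signal: "integrable D (\<lambda>x. exp (s * x))"
    and int_interference: "integrable D (\<lambda>x. exp (- (s * \<beta>) * x))"
    and interference_lt_1: "(\<integral>x. exp (- (s * \<beta>) * x) \<partial>D) < 1"
  shows "\<exists>C>0. (\<lambda>n. prob {\<omega> \<in> space M. \<forall>S \<subseteq> {..<n}.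
            real (throughput N0 \<beta> (\<lambda>k i. X n k i \<omega>) S) \<le> C * ln (real n)}) \<longlonglongrightarrow> 1"
proof -
  have nonneg_mgf: "0 \<le> (\<integral>x. exp (s * x) \<partial>D)" "0 \<le> (\<integral>x. exp (- (s * \<beta>) * x) \<partial>D)"
    by (simp_all add: Bochner_Integration.integral_nonneg)
  obtain C where C: "C > 0" and union_bound:
    "(\<lambda>n. let t = nat \<lfloor>C * ln (real n)\<rfloor> + 1 in real (n choose t) *
       (\<integral>x. exp (s * x) \<partial>D) ^ t * (\<integral>x. exp (- (s * \<beta>) * x) \<partial>D) ^ (t * (t - 1))) \<longlonglongrightarrow> 0"
    (is "?\<epsilon> \<longlonglongrightarrow> 0")
    using binomial_union_bound_tendsto_0[OF nonneg_mgf interference_lt_1] by blast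
  define P where "P n = prob {\<omega> \<in> space M. \<forall>S \<subseteq> {..<n}.
            real (throughput N0 \<beta> (\<lambda>k i. X n k i \<omega>) S) \<le> C * ln (real n)}" for n
  have lower: "1 - ?\<epsilon> n \<le> P n" for n
  proof -
    have "0 \<le> C * ln (real n)" using C by (cases "n = 0") simp_all
    then have t: "real (nat \<lfloor>C * ln (real n)\<rfloor> + 1) - 1 \<le> C * ln (real n)" by linarith
    have distr_n: "\<And>k i. k \<in> {..<n} \<Longrightarrow> i \<in> {..<n} \<Longrightarrow> distr M borel (X n k i) = D"
      using distr by simp
    show ?thesis
      using prob_all_throughputs_le_ge[OF finite_lessThan indep distr_n nonneg N0 \<beta> s
          int_signal int_interference t]
      by (simp add: Let_def P_def)
  qed
  have upper: "P n \<le> 1" for n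
    by (simp add: P_def)
  have "(\<lambda>n. 1 - ?\<epsilon> n) \<longlonglongrightarrow> 1"
    using tendsto_diff[OF tendsto_const union_bound, of 1] by simp
  then have "P \<longlonglongrightarrow> 1"
    by (rule tendsto_sandwich[OF always_eventually[OF allI[OF lower]] always_eventually[OF allI[OF upper]]
          _ tendsto_const])
  then show ?thesis using C unfolding P_def by blast
qed

theorem theorem2:
  fixes M :: "'a measure" and D :: "real measure"
    and \<gamma> :: "nat \<Rightarrow> nat \<Rightarrow> nat \<Rightarrow> 'a \<Rightarrow> real"
    and N0 \<beta> :: real
  assumes "prob_space M"
    and "\<And>n i j. i < n \<Longrightarrow> j < n \<Longrightarrow> \<gamma> n i j \<in> borel_measurable M"
    and "\<And>n. prob_space.indep_vars M (\<lambda>_. borel) (\<lambda>(i, j). \<gamma> n i j) ({..<n} \<times> {..<n})"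
    and "\<And>n i j. i < n \<Longrightarrow> j < n \<Longrightarrow> distr M borel (\<gamma> n i j) = D"
    and "AE x in D. 0 \<le> x"
    and "integrable D (\<lambda>x. x)" and "(\<integral>x. x \<partial>D) > 0"
    and "\<exists>s>0. integrable D (\<lambda>x. exp (s * x))"
    and "N0 \<ge> 0" and "\<beta> > 0"
  shows "\<exists>C>0. (\<lambda>n. measure M {\<omega> \<in> space M. \<forall>S \<subseteq> {..<n}.
            real (throughput N0 \<beta> (\<lambda>k i. \<gamma> n k i \<omega>) S) \<le> C * ln (real n)}) \<longlonglongrightarrow> 1"
proof -
  interpret prob_space M by (rule assms(1))
  obtain s where s: "s > 0" and int_signal: "integrable D (\<lambda>x. exp (s * x))"
    using assms(8) by blast
  have D: "D = distr M borel (\<gamma> 1 0 0)" using assms(4)[of 0 1 0] by simp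
  interpret D: prob_space D unfolding D using assms(2) by (simp add: prob_space_distr)
  have "(\<lambda>x. x) \<in> borel_measurable D" "s * \<beta> > 0" using s assms(10) by (simp_all add: D)
  note interference = D.expectation_exp_neg_lt_1[OF this(1) assms(5,7) this(2)]
  show ?thesis
    using throughputs_le_log_tendsto_1[OF assms(3,4,5,9,10) less_imp_le[OF s] int_signal interference]
    by simp
qed

end
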